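(* Let $d_H$ be an $H$-metric on $\chi$ with parameter $\gamma$. Then GD-$k$ with rate $r=\frac{1}{\gamma k^2}$ is $(4mk+k^2)\gamma$-competitive for $k$-MPMD on $(\chi,d_H)$: for every instance $\sigma$ with $m$ requests (and for every way of making the arbitrary choices in the algorithm), the total cost of the perfect $k$-way matching output by GD-$k$ is at most $(4mk+k^2)\gamma\cdot\mathcal{OPT}(\sigma)$.
   Context: $k\ge2$. An $H$-metric with parameter $\gamma$ (integer, $1\le\gamma\le k-1$) is a map $d_H:\chi^k\to[0,\infty)$ that is invariant under permutation of its arguments, is zero iff all arguments are equal, satisfies $d_H(p_1,\ldots,p_k)\le d_H(p_1,\ldots,p_i,a,\ldots,a)+d_H(a,\ldots,a,p_{i+1},\ldots,p_k)$ for all $p_j,a\in\chi$ and $i\in\{1,\dots,k\}$ (with $k-i$, resp. $i$, copies of $a$), and satisfies: $d_H(p)\le d_H(p')$ whenever the set of distinct entries of $p$ is a proper subset of that of $p'$, and $d_H(p)\le\gamma d_H(p')$ whenever these sets are equal. $k$-MPMD: an instance is $\sigma=(V,\mathrm{atime},\mathrm{pos})$ with $V=\{u_1,\ldots,u_m\}$ ($m$ a multiple of $k$), nondecreasing arrival times $\mathrm{atime}:V\to\mathbb R_{\ge0}$ and positions $\mathrm{pos}:V\to\chi$; requests arrive over time and an online algorithm must partition $V$ into $k$-element groups (a perfect $k$-way matching), forming a group $\{v_1,\ldots,v_k\}$ of arrived, unmatched requests at some time $\tau$ at cost $d_H(\mathrm{pos}(v_1),\ldots,\mathrm{pos}(v_k))+\sum_{i=1}^k(\tau-\mathrm{atime}(v_i))$.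 $\mathcal{OPT}(\sigma)$ is the minimum, over all perfect $k$-way matchings $\mathcal M$ of $V$, of $\sum_{F\in\mathcal M}\big(d_H(\mathrm{pos}(F))+\sum_{v\in F}(\max_{u\in F}\mathrm{atime}(u)-\mathrm{atime}(v))\big)$. The metric $d$ on $\chi$ is $d(p,q):=d_H(p,q,\ldots,q)+d_H(q,p,\ldots,p)$ (first argument once, second $k-1$ times); for distinct requests, $\mathrm{opt\text{-}cost}(\{u,w\}):=d(\mathrm{pos}(u),\mathrm{pos}(w))+|\mathrm{atime}(u)-\mathrm{atime}(w)|$; $\delta(S)$ is the set of pairs of distinct requests with exactly one element in $S$. Algorithm GD-$k$ (Greedy Dual for $k$-MPMD) runs in continuous time from $0$. It maintains: a partition of the already-arrived requests into "active sets" ($A(v)$ denotes the active set containing $v$); a family $\mathcal M$ of disjoint $k$-element sets of requests (the groups matched so far); a request is free if it lies in no set of $\mathcal M$, and $\mathrm{free}(S)$ is the set of free requests of $S$; and dual values $y_S(\tau)\ge0$ for $S\subseteq V$, all initially $0$. When a request $v$ arrives, $A(v):=\{v\}$ is created. At every moment, for each active set $S$ with $\mathrm{free}(S)\ne\emptyset$, $y_S$ increases continuously at rate $r$; all other $y_S$ stay constant. Whenever a pair $e=\{u,w\}$ of arrived requests with $A(u)\ne A(w)$ becomes tight, i.e. $\sum_{S:e\in\delta(S)}y_S=\frac{1}{\gamma k^2}\mathrm{opt\text{-}cost}(e)$, the algorithm replaces $A(u)$ and $A(w)$ by the single active set $S=A(u)\cup A(w)$, marks $e$, and, while $|\mathrm{free}(S)|\ge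 k$, chooses arbitrarily $k$ free requests of $S$ and adds them as a group to $\mathcal M$ (they are matched at the current time). *)

theory Defs
  imports Complex_Main "HOL-Library.Multiset"
begin

text \<open>A k-tuple of points of chi is a list of length k; chi is the type 'p.\<close>

definition H_metric :: "nat \<Rightarrow> nat \<Rightarrow> ('p list \<Rightarrow> real) \<Rightarrow> bool" where
  "H_metric k \<gamma> dH \<longleftrightarrow>
     1 \<le> \<gamma> \<and> \<gamma> \<le> k - 1 \<and>
     (\<forall>ps. length ps = k \<longrightarrow> 0 \<le> dH ps) \<and>
     (\<forall>ps qs. length ps = k \<longrightarrow> mset qs = mset ps \<longrightarrow> dH qs = dH ps) \<and>
     (\<forall>ps. length ps = k \<longrightarrow> (dH ps = 0 \<longleftrightarrow> (\<forall>a\<in>set ps. \<forall>b\<in>set ps. a = b))) \<and>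
     (\<forall>ps a i. length ps = k \<longrightarrow> 1 \<le> i \<longrightarrow> i \<le> k \<longrightarrow>
        dH ps \<le> dH (take i ps @ replicate (k - i) a) + dH (replicate i a @ drop i ps)) \<and>
     (\<forall>ps qs. length ps = k \<longrightarrow> length qs = k \<longrightarrow> set ps \<subset> set qs \<longrightarrow> dH ps \<le> dH qs) \<and>
     (\<forall>ps qs. length ps = k \<longrightarrow> length qs = k \<longrightarrow> set ps = set qs \<longrightarrow> dH ps \<le> real \<gamma> * dH qs)"

definition induced_metric :: "nat \<Rightarrow> ('p list \<Rightarrow> real) \<Rightarrow> 'p \<Rightarrow> 'p \<Rightarrow> real" where
  "induced_metric k dH p q = dH (p # replicate (k - 1) q) + dH (q # replicate (k - 1) p)"

text \<open>Requests are the naturals 0..<m.\<close>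
definition opt_cost :: "nat \<Rightarrow> ('p list \<Rightarrow> real) \<Rightarrow> (nat \<Rightarrow> real) \<Rightarrow> (nat \<Rightarrow> 'p) \<Rightarrow> nat \<Rightarrow> nat \<Rightarrow> real" where
  "opt_cost k dH atime pos u w = induced_metric k dH (pos u) (pos w) + \<bar>atime u - atime w\<bar>"

text \<open>Cost of d_H on a group (set) of requests; the order is irrelevant by symmetry.\<close>
definition group_dist :: "('p list \<Rightarrow> real) \<Rightarrow> (nat \<Rightarrow> 'p) \<Rightarrow> nat set \<Rightarrow> real" where
  "group_dist dH pos F = dH (map pos (sorted_list_of_set F))"

definition perfect_kmatching :: "nat \<Rightarrow> nat \<Rightarrow> nat set set \<Rightarrow> bool" where
  "perfect_kmatching k m P \<longleftrightarrow>
     (\<forall>F\<in>P. F \<subseteq> {..<m} \<and> card F = k) \<and> \<Union>P = {..<m} \<and>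
     (\<forall>F\<in>P. \<forall>G\<in>P. F \<noteq> G \<longrightarrow> F \<inter> G = {})"

definition matching_cost :: "('p list \<Rightarrow> real) \<Rightarrow> (nat \<Rightarrow> real) \<Rightarrow> (nat \<Rightarrow> 'p) \<Rightarrow> nat set set \<Rightarrow> real" where
  "matching_cost dH atime pos P =
     (\<Sum>F\<in>P. group_dist dH pos F + (\<Sum>v\<in>F. Max (atime ` F) - atime v))"

definition OPT :: "nat \<Rightarrow> nat \<Rightarrow> ('p list \<Rightarrow> real) \<Rightarrow> (nat \<Rightarrow> real) \<Rightarrow> (nat \<Rightarrow> 'p) \<Rightarrow> real" where
  "OPT k m dH atime pos = Min (matching_cost dH atime pos ` {P. perfect_kmatching k m P})"

text \<open>A configuration: (current time, active sets, matched groups with their matching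
  times, dual values y_S).\<close>
type_synonym config = "real \<times> nat set set \<times> (nat set \<times> real) set \<times> (nat set \<Rightarrow> real)"

definition matched :: "(nat set \<times> real) set \<Rightarrow> nat set" where
  "matched M = \<Union>(fst ` M)"

definition free :: "(nat set \<times> real) set \<Rightarrow> nat set \<Rightarrow> nat set" where
  "free M S = S - matched M"

definition dual_sum :: "nat \<Rightarrow> (nat set \<Rightarrow> real) \<Rightarrow> nat \<Rightarrow> nat \<Rightarrow> real" where
  "dual_sum m y u w = (\<Sum>S\<in>{S. S \<subseteq> {..<m} \<and> (u \<in> S) \<noteq> (w \<in> S)}. y S)"

definition threshold :: "nat \<Rightarrow> nat \<Rightarrow> ('p list \<Rightarrow> real) \<Rightarrow> (nat \<Rightarrow> real) \<Rightarrow> (nat \<Rightarrow> 'p) \<Rightarrow> nat \<Rightarrow> nat \<Rightarrow> real" where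
  "threshold k \<gamma> dH atime pos u w = opt_cost k dH atime pos u w / (real \<gamma> * real k ^ 2)"

definition cross :: "nat set set \<Rightarrow> nat \<Rightarrow> nat \<Rightarrow> bool" where
  "cross A u w \<longleftrightarrow> u \<in> \<Union>A \<and> w \<in> \<Union>A \<and> u \<noteq> w \<and> \<not> (\<exists>S\<in>A. u \<in> S \<and> w \<in> S)"

inductive gd_step :: "nat \<Rightarrow> nat \<Rightarrow> real \<Rightarrow> ('p list \<Rightarrow> real) \<Rightarrow> nat \<Rightarrow> (nat \<Rightarrow> real) \<Rightarrow> (nat \<Rightarrow> 'p)
    \<Rightarrow> config \<Rightarrow> config \<Rightarrow> bool"
  for k \<gamma> r dH m atime pos where
  advance:
    "\<lbrakk> t < t';
       \<forall>v<m. atime v < t' \<longrightarrow> v \<in> \<Union>A;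
       y' = (\<lambda>S. if S \<in> A \<and> free M S \<noteq> {} then y S + r * (t' - t) else y S);
       \<forall>u w. cross A u w \<longrightarrow>
          dual_sum m y u w < threshold k \<gamma> dH atime pos u w \<and>
          dual_sum m y' u w \<le> threshold k \<gamma> dH atime pos u w \<rbrakk>
     \<Longrightarrow> gd_step k \<gamma> r dH m atime pos (t, A, M, y) (t', A, M, y')"
| arrive:
    "\<lbrakk> v < m; v \<notin> \<Union>A; atime v = t \<rbrakk>
     \<Longrightarrow> gd_step k \<gamma> r dH m atime pos (t, A, M, y) (t, insert {v} A, M, y)"
| merge:
    "\<lbrakk> Su \<in> A; Sw \<in> A; u \<in> Su; w \<in> Sw; Su \<noteq> Sw;
       dual_sum m y u w = threshold k \<gamma> dH atime pos u w;
       S = Su \<union> Sw;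
       \<forall>G\<in>Gs. G \<subseteq> free M S \<and> card G = k;
       \<forall>G\<in>Gs. \<forall>G'\<in>Gs. G \<noteq> G' \<longrightarrow> G \<inter> G' = {};
       card (free M S - \<Union>Gs) < k \<rbrakk>
     \<Longrightarrow> gd_step k \<gamma> r dH m atime pos (t, A, M, y)
           (t, insert S (A - {Su, Sw}), M \<union> (\<lambda>G. (G, t)) ` Gs, y)"

definition gd_init :: config where
  "gd_init = (0, {}, {}, (\<lambda>S. 0))"

definition gd_run :: "nat \<Rightarrow> nat \<Rightarrow> real \<Rightarrow> ('p list \<Rightarrow> real) \<Rightarrow> nat \<Rightarrow> (nat \<Rightarrow> real) \<Rightarrow> (nat \<Rightarrow> 'p)
    \<Rightarrow> (nat set \<times> real) set \<Rightarrow> bool" where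
  "gd_run k \<gamma> r dH m atime pos M \<longleftrightarrow>
     (\<exists>t A y. (gd_step k \<gamma> r dH m atime pos)\<^sup>*\<^sup>* gd_init (t, A, M, y)) \<and> matched M = {..<m}"

definition alg_cost :: "('p list \<Rightarrow> real) \<Rightarrow> (nat \<Rightarrow> real) \<Rightarrow> (nat \<Rightarrow> 'p) \<Rightarrow> (nat set \<times> real) set \<Rightarrow> real" where
  "alg_cost dH atime pos M = (\<Sum>(G, \<tau>)\<in>M. group_dist dH pos G + (\<Sum>v\<in>G. \<tau> - atime v))"

end

theory Submission
  imports Defs
begin

text \<open>GD-\<open>k\<close> is a primal-dual algorithm, and the proof is an invariant relating the cost paid
  so far to the dual total \<open>Y = \<Sum> y\<^sub>S\<close>. Waiting costs at most \<open>(k - 1) \<gamma> k\<^sup>2 Y\<close>, since each set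
  whose dual grows holds fewer than \<open>k\<close> free requests. Inside an active set any two requests are
  joined by a path of tight pairs meeting each dual set in at most two boundary crossings; with the
  star inequality of \<open>d\<^sub>H\<close> this bounds the \<open>d\<^sub>H\<close>-cost of every group by \<open>2 \<gamma> k\<^sup>3 Y\<close>. Conversely,
  every set carrying dual value has size not divisible by \<open>k\<close>, so each perfect \<open>k\<close>-matching
  separates at least \<open>2(k - 1)\<close> ordered pairs across it, and dual feasibility yields
  \<open>k Y \<le> OPT\<close>. With \<open>m / k\<close> groups the algorithm pays at most \<open>(k - 1 + 2m) \<gamma> k\<^sup>2 Y\<close>.\<close>

lemma perfect_kmatching_finite:
  assumes "perfect_kmatching k m P"
  shows "finite P" and "F \<in> P \<Longrightarrow> finite F \<and> F \<subseteq> {..<m} \<and> card F = k"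
proof -
  have "P \<subseteq> Pow {..<m}" using assms unfolding perfect_kmatching_def by blast
  then show "finite P" by (rule finite_subset) simp
  show "F \<in> P \<Longrightarrow> finite F \<and> F \<subseteq> {..<m} \<and> card F = k"
    using assms unfolding perfect_kmatching_def by (auto intro: finite_subset[OF _ finite_lessThan])
qed

lemma card_Union_uniform:
  assumes "pairwise disjnt Q" and "\<And>F. F \<in> Q \<Longrightarrow> finite F \<and> card F = k"
  shows "card (\<Union>Q) = k * card Q"
proof -
  have "card (\<Union>Q) = sum card Q" using card_Union_disjoint assms by blast
  also have "\<dots> = k * card Q" using assms(2) by simp
  finally show ?thesis .
qed

text \<open>A set whose size is not a multiple of \<open>k\<close> cannot be a union of groups of a perfect
  \<open>k\<close>-matching, so some group crosses it.\<close>
lemma perfect_kmatching_crosses: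
  assumes P: "perfect_kmatching k m P" and S: "S \<subseteq> {..<m}" and nd: "\<not> k dvd card S"
  shows "\<exists>F\<in>P. F \<inter> S \<noteq> {} \<and> F - S \<noteq> {}"
proof (rule ccontr)
  assume no_cross: "\<not> ?thesis"
  define Q where "Q = {F \<in> P. F \<subseteq> S}"
  have cover: "\<Union>P = {..<m}" and disj: "\<And>F G. F \<in> P \<Longrightarrow> G \<in> P \<Longrightarrow> F \<noteq> G \<Longrightarrow> F \<inter> G = {}"
    using P unfolding perfect_kmatching_def by blast+
  have "S \<subseteq> \<Union>Q"
  proof
    fix v assume v: "v \<in> S"
    then obtain F where F: "F \<in> P" "v \<in> F" using S cover by blast
    then have "F \<subseteq> S" using no_cross v by blast
    then show "v \<in> \<Union>Q" using F unfolding Q_def by blast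
  qed
  then have "S = \<Union>Q" unfolding Q_def by blast
  moreover have "pairwise disjnt Q"
    using disj unfolding Q_def pairwise_def disjnt_def by blast
  moreover have "finite F \<and> card F = k" if "F \<in> Q" for F
    using perfect_kmatching_finite(2)[OF P] that unfolding Q_def by blast
  ultimately have "card S = k * card Q" using card_Union_uniform by metis
  then show False using nd by simp
qed

lemma perfect_kmatching_intervals:
  assumes k: "0 < k" and kd: "k dvd m"
  shows "perfect_kmatching k m ((\<lambda>i. {i * k..<(i + 1) * k}) ` {..<m div k})"
proof -
  define F where "F = (\<lambda>i. {i * k..<(i + 1) * k})"
  have mk: "m div k * k = m" using kd by simp
  have sub: "F i \<subseteq> {..<m}" if "i < m div k" for i
  proof -
    have "(i + 1) * k \<le> m div k * k" using that by (intro mult_le_mono1) simp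
    then show ?thesis unfolding F_def using mk by auto
  qed
  have cover: "v \<in> F (v div k) \<and> v div k < m div k" if "v < m" for v
  proof -
    have "v div k * k \<le> v" "v < (v div k + 1) * k"
      using dividend_less_div_times[OF k, of v] by (simp_all add: div_times_less_eq_dividend algebra_simps)
    moreover have "v div k < m div k"
      using \<open>v div k * k \<le> v\<close> that mk by (metis le_less_trans mult_less_cancel2)
    ultimately show ?thesis unfolding F_def by simp
  qed
  have disj: "F i \<inter> F j = {}" if "i \<noteq> j" for i j
  proof -
    have "i + 1 \<le> j \<or> j + 1 \<le> i" using that by linarith
    then have "(i + 1) * k \<le> j * k \<or> (j + 1) * k \<le> i * k" using mult_le_mono1 by blast
    then show ?thesis unfolding F_def by auto
  qed
  have "\<Union>(F ` {..<m div k}) = {..<m}"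
    using sub cover by (auto simp del: lessThan_iff)
  moreover have "card (F i) = k" for i by (simp add: F_def)
  ultimately show ?thesis
    unfolding perfect_kmatching_def F_def[symmetric] using sub disj by (auto; metis disjoint_iff)
qed

lemma OPT_attained:
  assumes "0 < k" and "k dvd m"
  obtains P where "perfect_kmatching k m P" and "OPT k m dH atime pos = matching_cost dH atime pos P"
proof -
  define Ms where "Ms = {P. perfect_kmatching k m P}"
  have "Ms \<subseteq> Pow (Pow {..<m})" unfolding Ms_def perfect_kmatching_def by blast
  then have "finite Ms" by (rule finite_subset) simp
  moreover have "Ms \<noteq> {}" using perfect_kmatching_intervals[OF assms] unfolding Ms_def by blast
  ultimately have "OPT k m dH atime pos \<in> matching_cost dH atime pos ` Ms"
    unfolding OPT_def Ms_def[symmetric] by (intro Min_in) simp_all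
  then show ?thesis using that unfolding Ms_def by blast
qed

lemma separated_pairs_ge:
  assumes fF: "finite F" and "F \<inter> S \<noteq> {}" and "F - S \<noteq> {}"
  shows "2 * (real (card F) - 1) \<le> (\<Sum>u\<in>F. \<Sum>w\<in>F. if (u \<in> S) \<noteq> (w \<in> S) then 1 else 0 :: real)"
proof -
  define a where "a = card (F \<inter> S)"
  define b where "b = card (F - S)"
  have row: "(\<Sum>w\<in>F. if (u \<in> S) \<noteq> (w \<in> S) then 1 else 0 :: real) = (if u \<in> S then real b else real a)" for u
  proof -
    have "(\<Sum>w\<in>F. if (u \<in> S) \<noteq> (w \<in> S) then 1 else 0 :: real)
        = real (card {w \<in> F. (u \<in> S) \<noteq> (w \<in> S)})"
      using fF by (simp add: sum.If_cases Int_def)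
    moreover have "{w \<in> F. (u \<in> S) \<noteq> (w \<in> S)} = (if u \<in> S then F - S else F \<inter> S)" by auto
    ultimately show ?thesis unfolding a_def b_def by simp
  qed
  have "(\<Sum>u\<in>F. \<Sum>w\<in>F. if (u \<in> S) \<noteq> (w \<in> S) then 1 else 0 :: real)
      = (\<Sum>u\<in>F. if u \<in> S then real b else real a)"
    by (intro sum.cong refl row)
  also have "\<dots> = 2 * (real a * real b)"
    using fF by (simp add: sum.If_cases Int_def a_def b_def Diff_eq)
  finally have "(\<Sum>u\<in>F. \<Sum>w\<in>F. if (u \<in> S) \<noteq> (w \<in> S) then 1 else 0 :: real) = 2 * (real a * real b)" .
  moreover have "card F = a + b"
    unfolding a_def b_def using fF by (metis card_Int_Diff)
  moreover have "1 \<le> a" "1 \<le> b" using assms unfolding a_def b_def by (auto simp: Suc_le_eq card_gt_0_iff)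
  moreover have "0 \<le> (real a - 1) * (real b - 1)" using calculation(3,4) by simp
  ultimately show ?thesis by (simp add: algebra_simps)
qed

locale H_metric_space =
  fixes k \<gamma> :: nat and dH :: "'p list \<Rightarrow> real"
  assumes k_ge_2: "2 \<le> k" and H_metric: "H_metric k \<gamma> dH"
begin

abbreviation d :: "'p \<Rightarrow> 'p \<Rightarrow> real" where "d \<equiv> induced_metric k dH"

lemma gamma_ge_1: "1 \<le> \<gamma>"
  using H_metric unfolding H_metric_def by blast

lemma dH_nonneg: "length ps = k \<Longrightarrow> 0 \<le> dH ps"
  using H_metric unfolding H_metric_def by blast

lemma dH_mset_eq: "length ps = k \<Longrightarrow> mset qs = mset ps \<Longrightarrow> dH qs = dH ps"
  using H_metric unfolding H_metric_def by blast

lemma dH_replicate: "dH (replicate k a) = 0"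
  using H_metric unfolding H_metric_def by simp

lemma dH_triangle:
  "length ps = k \<Longrightarrow> 1 \<le> i \<Longrightarrow> i \<le> k \<Longrightarrow>
    dH ps \<le> dH (take i ps @ replicate (k - i) a) + dH (replicate i a @ drop i ps)"
  using H_metric unfolding H_metric_def by blast

lemma dH_mono:
  assumes "length ps = k" "length qs = k" "set ps \<subseteq> set qs"
  shows "dH ps \<le> real \<gamma> * dH qs"
proof (cases "set ps = set qs")
  case True
  then show ?thesis using assms H_metric unfolding H_metric_def by blast
next
  case False
  then have "dH ps \<le> dH qs" using assms H_metric unfolding H_metric_def by blast
  moreover have "dH qs \<le> real \<gamma> * dH qs"
    using gamma_ge_1 dH_nonneg[OF assms(2)] mult_right_mono[of 1 "real \<gamma>" "dH qs"] by simp
  ultimately show ?thesis by linarith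
qed

lemma length_Cons_replicate: "length (p # replicate (k - 1) q) = k"
  using k_ge_2 by simp

lemma d_nonneg: "0 \<le> d p q"
  unfolding induced_metric_def
  using dH_nonneg[OF length_Cons_replicate] add_nonneg_nonneg by blast

lemma d_refl: "d p p = 0"
proof -
  have "p # replicate (k - 1) p = replicate k p" using k_ge_2 by (cases k) auto
  then show ?thesis unfolding induced_metric_def by (simp add: dH_replicate)
qed

lemma d_sym: "d p q = d q p"
  unfolding induced_metric_def by simp

lemma d_triangle: "d p q \<le> d p s + d s q"
proof -
  have "dH (a # replicate (k - 1) b) \<le> dH (a # replicate (k - 1) s) + dH (s # replicate (k - 1) b)" for a b
    using dH_triangle[OF length_Cons_replicate[of a b], of 1 s] k_ge_2 by simp
  from this[of p q] this[of q p] show ?thesis unfolding induced_metric_def by linarith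
qed

lemma dH_snoc_le:
  assumes "length xs = k - 1"
  shows "dH (xs @ [q]) \<le> dH (xs @ [a]) + d a q"
proof -
  have "dH (xs @ [q]) \<le> dH (xs @ [a]) + dH (replicate (k - 1) a @ [q])"
    using dH_triangle[of "xs @ [q]" "k - 1" a] assms k_ge_2 by (simp add: Suc_diff_le)
  also have "dH (replicate (k - 1) a @ [q]) = dH (q # replicate (k - 1) a)"
    by (rule dH_mset_eq[OF length_Cons_replicate]) simp
  also have "\<dots> \<le> d a q"
    unfolding induced_metric_def using dH_nonneg[OF length_Cons_replicate] by simp
  finally show ?thesis by simp
qed

text \<open>Replacing the entries other than \<open>a\<close> by \<open>a\<close> one at a time, each replacement
  costs at most the distance to \<open>a\<close>.\<close>
lemma dH_le_star:
  "length ps = k \<Longrightarrow> dH ps \<le> (\<Sum>q\<leftarrow>ps. d a q)"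
proof (induction "length (filter (\<lambda>q. q \<noteq> a) ps)" arbitrary: ps rule: less_induct)
  case less
  show ?case
  proof (cases "\<exists>q\<in>set ps. q \<noteq> a")
    case False
    then have "ps = replicate k a" using replicate_length_same[of ps a] less.prems by auto
    then show ?thesis by (simp add: dH_replicate d_refl sum_list_replicate)
  next
    case True
    then obtain q where q: "q \<in> set ps" "q \<noteq> a" by blast
    define xs where "xs = remove1 q ps"
    have len: "length xs = k - 1" using q less.prems by (simp add: xs_def length_remove1)
    have fewer: "length (filter (\<lambda>q. q \<noteq> a) (xs @ [a])) < length (filter (\<lambda>q. q \<noteq> a) ps)"
      using q length_pos_if_in_set[of q "filter (\<lambda>q. q \<noteq> a) ps"]
      by (simp add: xs_def filter_remove1 length_remove1)
    have "dH ps = dH (xs @ [q])"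
      using q less.prems k_ge_2 by (intro dH_mset_eq) (simp_all add: xs_def length_remove1)
    also have "\<dots> \<le> dH (xs @ [a]) + d a q" by (rule dH_snoc_le[OF len])
    also have "\<dots> \<le> (\<Sum>x\<leftarrow>xs @ [a]. d a x) + d a q"
      using less.hyps[OF fewer] len k_ge_2 by simp
    also have "\<dots> = (\<Sum>x\<leftarrow>ps. d a x)"
      using sum_list_map_remove1[OF q(1), of "d a"] by (simp add: xs_def d_refl)
    finally show ?thesis .
  qed
qed

end

locale gd_instance = H_metric_space k \<gamma> dH for k \<gamma> :: nat and dH :: "'p list \<Rightarrow> real" +
  fixes m :: nat and atime :: "nat \<Rightarrow> real" and pos :: "nat \<Rightarrow> 'p"
begin

definition scale :: real where "scale = real \<gamma> * real k ^ 2"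

definition rate :: real where "rate = 1 / scale"

abbreviation thr :: "nat \<Rightarrow> nat \<Rightarrow> real" where "thr \<equiv> threshold k \<gamma> dH atime pos"

definition dual_total :: "(nat set \<Rightarrow> real) \<Rightarrow> real" where
  "dual_total y = (\<Sum>S\<in>Pow {..<m}. y S)"

definition load :: "(nat set \<Rightarrow> real) \<Rightarrow> nat \<Rightarrow> real" where
  "load y u = (\<Sum>S\<in>Pow {..<m}. if u \<in> S then y S else 0)"

text \<open>Inside an active set \<open>T\<close> the marked pairs form a tree, and every dual set \<open>S \<subseteq> T\<close>
  spans a subtree; so the tree path from \<open>u\<close> to \<open>w\<close> crosses the boundary of \<open>S\<close> at most
  \<open>cut_weight T S u w\<close> times.\<close>
definition cut_weight :: "nat set \<Rightarrow> nat set \<Rightarrow> nat \<Rightarrow> nat \<Rightarrow> real" where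
  "cut_weight T S u w =
     (if S \<subseteq> T then (if u \<in> S \<and> w \<in> S then 0 else if u \<in> S \<or> w \<in> S then 1 else 2) else 0)"

definition path_bound :: "(nat set \<Rightarrow> real) \<Rightarrow> nat set \<Rightarrow> nat \<Rightarrow> nat \<Rightarrow> real" where
  "path_bound y T u w = (\<Sum>S\<in>Pow {..<m}. y S * cut_weight T S u w)"

definition delay_cost :: "nat set \<Rightarrow> real" where
  "delay_cost F = (\<Sum>v\<in>F. Max (atime ` F) - atime v)"

lemma scale_pos: "0 < scale"
  unfolding scale_def using gamma_ge_1 k_ge_2 by simp

lemma rate_pos: "0 < rate"
  unfolding rate_def using scale_pos by simp

lemma scale_rate: "scale * rate = 1"
  unfolding rate_def using scale_pos by simp

lemma scale_thr: "scale * thr u w = d (pos u) (pos w) + \<bar>atime u - atime w\<bar>"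
  using scale_pos unfolding threshold_def opt_cost_def scale_def[symmetric] by simp

lemma thr_nonneg: "0 \<le> thr u w"
proof -
  have "0 \<le> scale * thr u w" using scale_thr[of u w] d_nonneg by simp
  then show ?thesis using scale_pos by (simp add: zero_le_mult_iff)
qed

lemma thr_sym: "thr u w = thr w u"
  unfolding threshold_def opt_cost_def by (simp add: d_sym abs_minus_commute)

lemma dual_sum_eq: "dual_sum m y u w = (\<Sum>S\<in>Pow {..<m}. if (u \<in> S) \<noteq> (w \<in> S) then y S else 0)"
  unfolding dual_sum_def by (simp add: sum.inter_filter[symmetric] Pow_def)

lemma dual_sum_sym: "dual_sum m y u w = dual_sum m y w u"
  unfolding dual_sum_eq by (rule sum.cong) auto

lemma dual_sum_self: "dual_sum m y u u = 0"
  unfolding dual_sum_eq by simp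

lemma cut_weight_mono: "R \<subseteq> T \<Longrightarrow> cut_weight R S u w \<le> cut_weight T S u w"
  unfolding cut_weight_def by auto

lemma cut_weight_sym: "cut_weight T S u w = cut_weight T S w u"
  unfolding cut_weight_def by auto

text \<open>Concatenating the path \<open>a \<leadsto> x\<close> in \<open>Su\<close>, the new tight pair \<open>x z\<close> and the path
  \<open>z \<leadsto> b\<close> in \<open>Sw\<close>.\<close>
lemma cut_weight_merge:
  assumes "Su \<inter> Sw = {}" "a \<in> Su" "x \<in> Su" "z \<in> Sw" "b \<in> Sw" "S \<noteq> {}"
    and "S \<subseteq> Su \<or> S \<subseteq> Sw \<or> S \<inter> (Su \<union> Sw) = {}"
  shows "cut_weight Su S a x + (if (x \<in> S) \<noteq> (z \<in> S) then 1 else 0) + cut_weight Sw S z b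
      \<le> cut_weight (Su \<union> Sw) S a b"
  using assms unfolding cut_weight_def by (auto simp: subset_iff)

lemma path_bound_mono:
  assumes "\<And>S. 0 \<le> y S" "\<And>S. y S \<le> y' S" "R \<subseteq> T"
  shows "path_bound y R u w \<le> path_bound y' T u w"
  unfolding path_bound_def
proof (rule sum_mono)
  fix S
  have "0 \<le> cut_weight R S u w" unfolding cut_weight_def by simp
  then show "y S * cut_weight R S u w \<le> y' S * cut_weight T S u w"
    using assms cut_weight_mono[OF assms(3)] by (meson mult_mono order_trans)
qed

lemma path_bound_le:
  assumes "\<And>S. 0 \<le> y S"
  shows "path_bound y T u w \<le> 2 * dual_total y"
proof -
  have "path_bound y T u w \<le> (\<Sum>S\<in>Pow {..<m}. y S * 2)"
    unfolding path_bound_def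
    by (rule sum_mono, rule mult_left_mono) (auto simp: cut_weight_def assms)
  then show ?thesis unfolding dual_total_def by (simp add: sum_distrib_right[symmetric] mult.commute)
qed

text \<open>The star inequality centred at any point of \<open>G\<close> bounds its \<open>d\<^sub>H\<close> by \<open>k\<close> pairwise
  distances.\<close>
lemma group_dist_le_dual_total:
  assumes y: "\<And>S. 0 \<le> y S"
    and dist: "\<And>u w. u \<in> T \<Longrightarrow> w \<in> T \<Longrightarrow> d (pos u) (pos w) \<le> scale * path_bound y T u w"
    and G: "G \<subseteq> T" "card G = k"
  shows "group_dist dH pos G \<le> 2 * scale * real k * dual_total y"
proof -
  have fG: "finite G" using G(2) k_ge_2 card.infinite by fastforce
  obtain c where c: "c \<in> G" using G(2) k_ge_2 by fastforce
  have "group_dist dH pos G \<le> (\<Sum>v\<leftarrow>sorted_list_of_set G. d (pos c) (pos v))"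
    unfolding group_dist_def using dH_le_star[of "map pos (sorted_list_of_set G)" "pos c"] G(2)
    by (simp add: comp_def)
  also have "\<dots> = (\<Sum>v\<in>G. d (pos c) (pos v))"
    using fG by (simp add: sum_list_distinct_conv_sum_set)
  also have "\<dots> \<le> (\<Sum>v\<in>G. 2 * scale * dual_total y)"
  proof (rule sum_mono)
    fix v assume "v \<in> G"
    then have "d (pos c) (pos v) \<le> scale * path_bound y T c v" using dist c G(1) by blast
    also have "\<dots> \<le> scale * (2 * dual_total y)"
      using path_bound_le[OF y] scale_pos by (simp add: mult_left_mono)
    finally show "d (pos c) (pos v) \<le> 2 * scale * dual_total y" by simp
  qed
  also have "\<dots> = 2 * scale * real k * dual_total y" using G(2) by simp
  finally show ?thesis .
qed

lemma delay_cost_nonneg: "finite F \<Longrightarrow> 0 \<le> delay_cost F"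
  unfolding delay_cost_def by (rule sum_nonneg) simp

lemma matching_cost_eq: "matching_cost dH atime pos P = (\<Sum>F\<in>P. group_dist dH pos F + delay_cost F)"
  unfolding matching_cost_def delay_cost_def ..

lemma scale_thr_le_group_cost:
  assumes fF: "finite F" and "card F = k" and u: "u \<in> F" and w: "w \<in> F" and "u \<noteq> w"
  shows "scale * thr u w \<le> 2 * real \<gamma> * group_dist dH pos F + delay_cost F"
proof -
  define qs where "qs = map pos (sorted_list_of_set F)"
  have lq: "length qs = k" and sq: "set qs = pos ` F" using assms unfolding qs_def by simp_all
  have "dH (pos a # replicate (k - 1) (pos b)) \<le> real \<gamma> * dH qs" if "a \<in> F" "b \<in> F" for a b
    by (rule dH_mono[OF length_Cons_replicate lq]) (use sq that in auto)
  from this[OF u w] this[OF w u]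
  have dist: "d (pos u) (pos w) \<le> 2 * real \<gamma> * group_dist dH pos F"
    unfolding induced_metric_def group_dist_def qs_def by simp
  define T where "T = Max (atime ` F)"
  have "\<bar>atime u - atime w\<bar> \<le> (T - atime u) + (T - atime w)"
    using fF u w unfolding T_def by (simp add: abs_le_iff)
  also have "\<dots> = (\<Sum>v\<in>{u, w}. T - atime v)" using \<open>u \<noteq> w\<close> by simp
  also have "\<dots> \<le> delay_cost F"
    unfolding delay_cost_def T_def[symmetric]
    by (rule sum_mono2[OF fF]) (use u w fF T_def in auto)
  finally show ?thesis using dist scale_thr[of u w] by linarith
qed

end

locale gd_invariant = gd_instance k \<gamma> dH m atime pos
  for k \<gamma> :: nat and dH :: "'p list \<Rightarrow> real" and m :: nat
    and atime :: "nat \<Rightarrow> real" and pos :: "nat \<Rightarrow> 'p" +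
  fixes t :: real and A :: "nat set set" and M :: "(nat set \<times> real) set" and y :: "nat set \<Rightarrow> real"
  assumes active_sets: "S \<in> A \<Longrightarrow> S \<noteq> {} \<and> S \<subseteq> {..<m}"
    and active_disjoint: "S \<in> A \<Longrightarrow> T \<in> A \<Longrightarrow> S \<noteq> T \<Longrightarrow> S \<inter> T = {}"
    and dual_nonneg: "0 \<le> y S"
    and dual_support: "y S \<noteq> 0 \<Longrightarrow> \<exists>T\<in>A. S \<subseteq> T"
    and dual_support_not_dvd: "y S \<noteq> 0 \<Longrightarrow> \<not> k dvd card S"
    and load_le: "u \<in> \<Union>A \<Longrightarrow> load y u \<le> rate * (t - atime u)"
    and dual_feasible: "u < m \<Longrightarrow> w < m \<Longrightarrow> u \<noteq> w \<Longrightarrow> dual_sum m y u w \<le> thr u w"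
    and finite_groups: "finite M"
    and group_card: "p \<in> M \<Longrightarrow> card (fst p) = k"
    and group_active: "p \<in> M \<Longrightarrow> \<exists>T\<in>A. fst p \<subseteq> T"
    and groups_disjoint: "p \<in> M \<Longrightarrow> q \<in> M \<Longrightarrow> p \<noteq> q \<Longrightarrow> fst p \<inter> fst q = {}"
    and free_card_less: "S \<in> A \<Longrightarrow> card (free M S) < k"
    and dist_le_path_bound:
      "S \<in> A \<Longrightarrow> u \<in> S \<Longrightarrow> w \<in> S \<Longrightarrow> d (pos u) (pos w) \<le> scale * path_bound y S u w"
    and delay_le: "(\<Sum>p\<in>M. \<Sum>v\<in>fst p. snd p - atime v) + (\<Sum>v\<in>\<Union>A - matched M. t - atime v)
      \<le> real (k - 1) * scale * dual_total y"
    and distance_le: "(\<Sum>p\<in>M. group_dist dH pos (fst p)) \<le> 2 * scale * real k * real (card M) * dual_total y"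
begin

lemma finite_active: "finite (\<Union>A)" "S \<in> A \<Longrightarrow> finite S"
  using active_sets by (auto intro: finite_subset[OF _ finite_lessThan])

lemma matched_subset_active: "matched M \<subseteq> \<Union>A"
  unfolding matched_def using group_active by fastforce

lemma dual_nonzero_nonempty: "y S \<noteq> 0 \<Longrightarrow> S \<noteq> {}"
  using dual_support_not_dvd by fastforce

lemma dual_total_nonneg: "0 \<le> dual_total y"
  unfolding dual_total_def by (simp add: sum_nonneg dual_nonneg)

text \<open>The matched part of an active set is a union of groups of size \<open>k\<close>, and fewer than
  \<open>k\<close> of its requests are free.\<close>
lemma active_not_dvd:
  assumes S: "S \<in> A" and "free M S \<noteq> {}"
  shows "\<not> k dvd card S"
proof
  assume "k dvd card S"
  define Gm where "Gm = {G \<in> fst ` M. G \<subseteq> S}"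
  have finS: "finite S" using finite_active S by blast
  have "S \<inter> matched M \<subseteq> \<Union>Gm"
  proof
    fix v assume v: "v \<in> S \<inter> matched M"
    then obtain p where p: "p \<in> M" "v \<in> fst p" unfolding matched_def by blast
    obtain T where "T \<in> A" "fst p \<subseteq> T" using group_active p(1) by blast
    then have "fst p \<subseteq> S" using active_disjoint S v p(2) by blast
    then show "v \<in> \<Union>Gm" using p unfolding Gm_def by blast
  qed
  then have "S \<inter> matched M = \<Union>Gm" unfolding Gm_def matched_def by blast
  moreover have "pairwise disjnt Gm"
    using groups_disjoint unfolding Gm_def pairwise_def disjnt_def by fastforce
  moreover have "finite G \<and> card G = k" if "G \<in> Gm" for G
    using that group_card finS unfolding Gm_def by (auto intro: finite_subset)
  ultimately have "card (S \<inter> matched M) = k * card Gm" by (simp add: card_Union_uniform)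
  moreover have "card S = card (S \<inter> matched M) + card (free M S)"
    using finS unfolding free_def by (metis card_Int_Diff)
  ultimately have "k dvd card (free M S)" using \<open>k dvd card S\<close> by (simp add: dvd_add_right_iff)
  moreover have "0 < card (free M S)" using assms finS unfolding free_def by (simp add: card_gt_0_iff)
  ultimately show False using free_card_less[OF S] by (meson nat_dvd_not_less)
qed

lemma scale_dual_sums_le:
  assumes fF: "finite F" and Fm: "F \<subseteq> {..<m}" and cF: "card F = k"
  shows "scale * (\<Sum>u\<in>F. \<Sum>w\<in>F. dual_sum m y u w)
    \<le> real k * (real k - 1) * (2 * real \<gamma> * group_dist dH pos F + delay_cost F)"
proof -
  define B where "B = 2 * real \<gamma> * group_dist dH pos F + delay_cost F"
  have row: "scale * (\<Sum>w\<in>F. dual_sum m y u w) \<le> (real k - 1) * B" if u: "u \<in> F" for u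
  proof -
    have "scale * (\<Sum>w\<in>F. dual_sum m y u w) = (\<Sum>w\<in>F - {u}. scale * dual_sum m y u w)"
      using sum.remove[OF fF u, of "dual_sum m y u"] by (simp add: dual_sum_self sum_distrib_left)
    also have "\<dots> \<le> (\<Sum>w\<in>F - {u}. B)"
    proof (rule sum_mono)
      fix w assume w: "w \<in> F - {u}"
      then have "dual_sum m y u w \<le> thr u w" using u Fm by (intro dual_feasible) auto
      then have "scale * dual_sum m y u w \<le> scale * thr u w" using scale_pos by simp
      also have "\<dots> \<le> B" unfolding B_def using scale_thr_le_group_cost[OF fF cF u] w by blast
      finally show "scale * dual_sum m y u w \<le> B" .
    qed
    also have "\<dots> = (real k - 1) * B" using fF u cF k_ge_2 by (simp add: of_nat_diff)
    finally show ?thesis .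
  qed
  have "scale * (\<Sum>u\<in>F. \<Sum>w\<in>F. dual_sum m y u w) = (\<Sum>u\<in>F. scale * (\<Sum>w\<in>F. dual_sum m y u w))"
    by (simp add: sum_distrib_left)
  also have "\<dots> \<le> (\<Sum>u\<in>F. (real k - 1) * B)" by (rule sum_mono) (rule row)
  also have "\<dots> = real k * (real k - 1) * B" using cF by simp
  finally show ?thesis unfolding B_def .
qed

text \<open>Every set carrying dual value has size not divisible by \<open>k\<close>, so some group of \<open>P\<close>
  crosses it and separates at least \<open>2(k - 1)\<close> ordered pairs.\<close>
lemma dual_total_le_dual_sums:
  assumes P: "perfect_kmatching k m P"
  shows "2 * (real k - 1) * dual_total y \<le> (\<Sum>F\<in>P. \<Sum>u\<in>F. \<Sum>w\<in>F. dual_sum m y u w)"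
proof -
  define sep :: "nat set \<Rightarrow> nat \<Rightarrow> nat \<Rightarrow> real"
    where "sep S u w = (if (u \<in> S) \<noteq> (w \<in> S) then 1 else 0)" for S u w
  define C where "C S = (\<Sum>F\<in>P. \<Sum>u\<in>F. \<Sum>w\<in>F. sep S u w)" for S
  have ds: "dual_sum m y u w = (\<Sum>S\<in>Pow {..<m}. y S * sep S u w)" for u w
    unfolding dual_sum_eq sep_def by (rule sum.cong) simp_all
  have "(\<Sum>F\<in>P. \<Sum>u\<in>F. \<Sum>w\<in>F. dual_sum m y u w)
      = (\<Sum>F\<in>P. \<Sum>u\<in>F. \<Sum>S\<in>Pow {..<m}. \<Sum>w\<in>F. y S * sep S u w)"
    unfolding ds by (intro sum.cong refl sum.swap)
  also have "\<dots> = (\<Sum>F\<in>P. \<Sum>S\<in>Pow {..<m}. \<Sum>u\<in>F. \<Sum>w\<in>F. y S * sep S u w)"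
    by (intro sum.cong refl sum.swap)
  also have "\<dots> = (\<Sum>S\<in>Pow {..<m}. y S * C S)"
    unfolding C_def by (subst sum.swap) (simp add: sum_distrib_left)
  finally have swap: "(\<Sum>F\<in>P. \<Sum>u\<in>F. \<Sum>w\<in>F. dual_sum m y u w) = (\<Sum>S\<in>Pow {..<m}. y S * C S)" .
  have "y S * (2 * (real k - 1)) \<le> y S * C S" for S
  proof (cases "y S = 0")
    case False
    obtain T where "T \<in> A" "S \<subseteq> T" using dual_support False by blast
    then have "S \<subseteq> {..<m}" using active_sets by blast
    then obtain F where F: "F \<in> P" "F \<inter> S \<noteq> {}" "F - S \<noteq> {}"
      using perfect_kmatching_crosses[OF P _ dual_support_not_dvd[OF False]] by auto
    have F': "finite F" "card F = k" using perfect_kmatching_finite(2)[OF P F(1)] by auto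
    have "2 * (real k - 1) \<le> (\<Sum>u\<in>F. \<Sum>w\<in>F. sep S u w)"
      unfolding sep_def using separated_pairs_ge[OF F'(1) F(2,3)] F'(2) by simp
    also have "\<dots> \<le> C S" unfolding C_def
      by (rule member_le_sum[OF F(1) _ perfect_kmatching_finite(1)[OF P]])
        (simp add: sep_def sum_nonneg)
    finally show ?thesis using dual_nonneg by (simp add: mult_left_mono)
  qed simp
  then have "(\<Sum>S\<in>Pow {..<m}. y S * (2 * (real k - 1))) \<le> (\<Sum>S\<in>Pow {..<m}. y S * C S)"
    by (rule sum_mono)
  then show ?thesis unfolding swap dual_total_def by (simp add: sum_distrib_right[symmetric] mult.commute)
qed

lemma dual_total_le_matching_cost:
  assumes P: "perfect_kmatching k m P"
  shows "real k * dual_total y \<le> matching_cost dH atime pos P"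
proof -
  define c where "c = 2 * real \<gamma> * real k * (real k - 1)"
  have c_pos: "0 < c" unfolding c_def using gamma_ge_1 k_ge_2 by simp
  have "c * (real k * dual_total y) = scale * (2 * (real k - 1) * dual_total y)"
    unfolding c_def scale_def by (simp add: power2_eq_square mult_ac)
  also have "\<dots> \<le> scale * (\<Sum>F\<in>P. \<Sum>u\<in>F. \<Sum>w\<in>F. dual_sum m y u w)"
    using dual_total_le_dual_sums[OF P] scale_pos by simp
  also have "\<dots> = (\<Sum>F\<in>P. scale * (\<Sum>u\<in>F. \<Sum>w\<in>F. dual_sum m y u w))"
    by (rule sum_distrib_left)
  also have "\<dots> \<le> (\<Sum>F\<in>P. real k * (real k - 1) * (2 * real \<gamma> * group_dist dH pos F + delay_cost F))"
    by (rule sum_mono, rule scale_dual_sums_le) (use perfect_kmatching_finite(2)[OF P] in auto)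
  also have "\<dots> \<le> (\<Sum>F\<in>P. c * (group_dist dH pos F + delay_cost F))"
  proof (rule sum_mono)
    fix F assume "F \<in> P"
    then have "0 \<le> delay_cost F" using delay_cost_nonneg perfect_kmatching_finite(2)[OF P] by blast
    then have "2 * real \<gamma> * group_dist dH pos F + delay_cost F \<le> 2 * real \<gamma> * (group_dist dH pos F + delay_cost F)"
      using gamma_ge_1 mult_right_mono[of 1 "2 * real \<gamma>" "delay_cost F"] by (simp add: algebra_simps)
    moreover have "0 \<le> real k * (real k - 1)" using k_ge_2 by simp
    ultimately have "real k * (real k - 1) * (2 * real \<gamma> * group_dist dH pos F + delay_cost F)
        \<le> real k * (real k - 1) * (2 * real \<gamma> * (group_dist dH pos F + delay_cost F))"
      by (rule mult_left_mono)
    also have "\<dots> = c * (group_dist dH pos F + delay_cost F)" unfolding c_def by (simp add: algebra_simps)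
    finally show "real k * (real k - 1) * (2 * real \<gamma> * group_dist dH pos F + delay_cost F)
        \<le> c * (group_dist dH pos F + delay_cost F)" .
  qed
  also have "\<dots> = c * matching_cost dH atime pos P"
    unfolding matching_cost_eq by (simp add: sum_distrib_left)
  finally show ?thesis using c_pos by simp
qed

lemma card_groups:
  assumes "matched M = {..<m}"
  shows "k * card M = m"
proof -
  have "inj_on fst M"
  proof (rule inj_onI)
    fix p q assume "p \<in> M" "q \<in> M" "fst p = fst q"
    then show "p = q" using groups_disjoint group_card k_ge_2 by fastforce
  qed
  moreover have "pairwise disjnt (fst ` M)"
    using groups_disjoint unfolding pairwise_def disjnt_def by fastforce
  moreover have "finite G \<and> card G = k" if "G \<in> fst ` M" for G
    using that group_card k_ge_2 card.infinite by fastforce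
  ultimately show ?thesis
    using card_Union_uniform[of "fst ` M" k] assms unfolding matched_def by (simp add: card_image)
qed

lemma alg_cost_le_dual_total:
  assumes "matched M = {..<m}"
  shows "alg_cost dH atime pos M \<le> (real k - 1 + 2 * real m) * scale * dual_total y"
proof -
  have "\<Union>A - matched M = {}" using assms active_sets by blast
  then have delay: "(\<Sum>p\<in>M. \<Sum>v\<in>fst p. snd p - atime v) \<le> (real k - 1) * scale * dual_total y"
    using delay_le k_ge_2 by (simp only: sum.empty add_0_right of_nat_diff) simp
  have "real m = real k * real (card M)" using card_groups[OF assms] by (metis of_nat_mult)
  then have "(\<Sum>p\<in>M. group_dist dH pos (fst p)) \<le> 2 * real m * scale * dual_total y"
    using distance_le by (simp only: mult_ac)
  moreover have "alg_cost dH atime pos M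
      = (\<Sum>p\<in>M. group_dist dH pos (fst p)) + (\<Sum>p\<in>M. \<Sum>v\<in>fst p. snd p - atime v)"
    unfolding alg_cost_def by (simp add: split_def sum.distrib)
  ultimately show ?thesis using delay by (simp add: algebra_simps)
qed

lemma alg_cost_le_OPT:
  assumes "matched M = {..<m}" and "k dvd m"
  shows "alg_cost dH atime pos M \<le> real ((4 * m * k + k ^ 2) * \<gamma>) * OPT k m dH atime pos"
proof -
  have "0 < k" using k_ge_2 by simp
  obtain P where "perfect_kmatching k m P" "OPT k m dH atime pos = matching_cost dH atime pos P"
    by (rule OPT_attained[OF \<open>0 < k\<close> assms(2)])
  then have OPT: "real k * dual_total y \<le> OPT k m dH atime pos"
    using dual_total_le_matching_cost by simp
  define c where "c = real \<gamma> * real k * (real k - 1 + 2 * real m)"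
  have "0 \<le> c" unfolding c_def using k_ge_2 by simp
  have "alg_cost dH atime pos M \<le> c * (real k * dual_total y)"
    using alg_cost_le_dual_total[OF assms(1)] unfolding c_def scale_def
    by (simp add: power2_eq_square mult_ac)
  also have "\<dots> \<le> c * OPT k m dH atime pos" using OPT \<open>0 \<le> c\<close> by (rule mult_left_mono)
  also have "\<dots> \<le> real ((4 * m * k + k ^ 2) * \<gamma>) * OPT k m dH atime pos"
  proof (rule mult_right_mono)
    show "0 \<le> OPT k m dH atime pos"
      using OPT dual_total_nonneg by (meson mult_nonneg_nonneg of_nat_0_le_iff order_trans)
    have "real k * (real k - 1 + 2 * real m) \<le> 4 * real m * real k + real k ^ 2"
      by (simp add: power2_eq_square algebra_simps)
    from mult_left_mono[OF this, of "real \<gamma>"]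
    show "c \<le> real ((4 * m * k + k ^ 2) * \<gamma>)" unfolding c_def by (simp add: mult_ac)
  qed
  finally show ?thesis .
qed

lemma gd_invariant_arrive:
  assumes v: "v < m" "v \<notin> \<Union>A" "atime v = t"
  shows "gd_invariant k \<gamma> dH m atime pos t (insert {v} A) M y"
proof -
  have no_dual: "y S = 0" if "v \<in> S" for S
    using that dual_support v(2) by blast
  have "load y v = 0" unfolding load_def by (rule sum.neutral) (simp add: no_dual)
  have "\<Union>(insert {v} A) - matched M = insert v (\<Union>A - matched M)"
    using matched_subset_active v(2) by auto
  then have waiting: "(\<Sum>w\<in>\<Union>(insert {v} A) - matched M. t - atime w) = (\<Sum>w\<in>\<Union>A - matched M. t - atime w)"
    using v finite_active by simp
  show ?thesis
  proof unfold_locales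
    show "(\<Sum>p\<in>M. \<Sum>v\<in>fst p. snd p - atime v) + (\<Sum>v\<in>\<Union>(insert {v} A) - matched M. t - atime v)
      \<le> real (k - 1) * scale * dual_total y"
      unfolding waiting by (rule delay_le)
    show "load y u \<le> rate * (t - atime u)" if "u \<in> \<Union>(insert {v} A)" for u
    proof -
      have "u = v \<or> u \<in> \<Union>A" using that by blast
      then show ?thesis using load_le \<open>load y v = 0\<close> v(3) by auto
    qed
    show "card (free M S) < k" if "S \<in> insert {v} A" for S
    proof (cases "S = {v}")
      case True
      have "card (free M {v}) \<le> card {v}" by (rule card_mono) (auto simp: free_def)
      then show ?thesis using True k_ge_2 by simp
    qed (use that free_card_less in auto)
    show "d (pos u) (pos w) \<le> scale * path_bound y S u w" if "S \<in> insert {v} A" "u \<in> S" "w \<in> S" for S u w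
    proof (cases "S = {v}")
      case True
      have "0 \<le> path_bound y S u w" unfolding path_bound_def cut_weight_def
        by (simp add: sum_nonneg dual_nonneg)
      then show ?thesis using True that d_refl scale_pos by simp
    qed (use that dist_le_path_bound in auto)
  qed (use active_sets active_disjoint v dual_nonneg dual_support dual_support_not_dvd
      dual_feasible finite_groups group_card group_active groups_disjoint distance_le
      in auto)
qed

end

lemma (in gd_instance) gd_invariant_init: "gd_invariant k \<gamma> dH m atime pos 0 {} {} (\<lambda>S. 0)"
  by unfold_locales (auto simp: dual_sum_def thr_nonneg dual_total_def matched_def load_def)

locale gd_merge = gd_invariant +
  fixes Su Sw :: "nat set" and x z :: nat and Gs :: "nat set set"
  assumes Su: "Su \<in> A" and Sw: "Sw \<in> A" and x: "x \<in> Su" and z: "z \<in> Sw" and Su_Sw: "Su \<noteq> Sw"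
    and tight: "dual_sum m y x z = thr x z"
    and Gs_free: "G \<in> Gs \<Longrightarrow> G \<subseteq> free M (Su \<union> Sw)"
    and Gs_card: "G \<in> Gs \<Longrightarrow> card G = k"
    and Gs_disjoint: "G \<in> Gs \<Longrightarrow> G' \<in> Gs \<Longrightarrow> G \<noteq> G' \<Longrightarrow> G \<inter> G' = {}"
    and Gs_rest: "card (free M (Su \<union> Sw) - \<Union>Gs) < k"
begin

abbreviation merged :: "nat set" where "merged \<equiv> Su \<union> Sw"

abbreviation active' :: "nat set set" where "active' \<equiv> insert merged (A - {Su, Sw})"

abbreviation new_groups :: "(nat set \<times> real) set" where "new_groups \<equiv> (\<lambda>G. (G, t)) ` Gs"

lemma Gs_merged: "G \<in> Gs \<Longrightarrow> G \<subseteq> merged" and Gs_unmatched: "G \<in> Gs \<Longrightarrow> G \<inter> matched M = {}"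
  using Gs_free unfolding free_def by blast+

lemma Su_Sw_disjoint: "Su \<inter> Sw = {}"
  using active_disjoint Su Sw Su_Sw by blast

lemma other_disjoint_merged: "T \<in> A - {Su, Sw} \<Longrightarrow> T \<inter> merged = {}"
  using active_disjoint Su Sw by blast

lemma finite_Gs: "finite Gs" and finite_new_group: "G \<in> Gs \<Longrightarrow> finite G"
proof -
  have "finite merged" using finite_active Su Sw by blast
  moreover have "Gs \<subseteq> Pow merged" using Gs_merged by blast
  ultimately show "finite Gs" "G \<in> Gs \<Longrightarrow> finite G" by (auto intro: finite_subset)
qed

lemma new_groups_disjoint: "M \<inter> new_groups = {}"
proof -
  have "G \<noteq> {}" if "G \<in> Gs" for G using Gs_card[OF that] k_ge_2 by auto
  then show ?thesis using Gs_unmatched unfolding matched_def by force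
qed

lemma matched_merge: "matched (M \<union> new_groups) = matched M \<union> \<Union>Gs"
  unfolding matched_def by (auto simp: image_image)

lemma sum_merge:
  "(\<Sum>p\<in>M \<union> new_groups. f (fst p) (snd p)) = (\<Sum>p\<in>M. f (fst p) (snd p)) + (\<Sum>G\<in>Gs. f G t)"
proof -
  have "(\<Sum>p\<in>M \<union> new_groups. f (fst p) (snd p))
      = (\<Sum>p\<in>M. f (fst p) (snd p)) + (\<Sum>p\<in>new_groups. f (fst p) (snd p))"
    by (rule sum.union_disjoint[OF finite_groups finite_imageI[OF finite_Gs] new_groups_disjoint])
  also have "(\<Sum>p\<in>new_groups. f (fst p) (snd p)) = (\<Sum>G\<in>Gs. f G t)"
    by (subst sum.reindex) (auto intro: inj_onI)
  finally show ?thesis .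
qed

lemma card_merge: "card (M \<union> new_groups) = card M + card Gs"
  using card_Un_disjoint[OF finite_groups _ new_groups_disjoint] finite_Gs
  by (simp add: card_image inj_on_def)

text \<open>The new marked pair \<open>x z\<close> is tight, so it links a path inside \<open>Su\<close> to one inside \<open>Sw\<close>.\<close>
lemma dist_le_path_bound_cross:
  assumes a: "a \<in> Su" and b: "b \<in> Sw"
  shows "d (pos a) (pos b) \<le> scale * path_bound y merged a b"
proof -
  have "d (pos x) (pos z) \<le> scale * dual_sum m y x z"
    using tight scale_thr[of x z] by simp
  then have "d (pos a) (pos b) \<le> scale * (path_bound y Su a x + dual_sum m y x z + path_bound y Sw z b)"
    using dist_le_path_bound[OF Su a x] dist_le_path_bound[OF Sw z b]
      d_triangle[of "pos a" "pos b" "pos x"] d_triangle[of "pos x" "pos b" "pos z"]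
    by (simp add: distrib_left)
  also have "\<dots> \<le> scale * path_bound y merged a b"
  proof (rule mult_left_mono)
    show "path_bound y Su a x + dual_sum m y x z + path_bound y Sw z b \<le> path_bound y merged a b"
      unfolding path_bound_def dual_sum_eq sum.distrib[symmetric]
    proof (rule sum_mono)
      fix S
      show "y S * cut_weight Su S a x + (if (x \<in> S) \<noteq> (z \<in> S) then y S else 0) + y S * cut_weight Sw S z b
          \<le> y S * cut_weight merged S a b"
      proof (cases "y S = 0")
        case False
        obtain T where "T \<in> A" "S \<subseteq> T" using dual_support False by blast
        then have "S \<subseteq> Su \<or> S \<subseteq> Sw \<or> S \<inter> merged = {}"
          using active_disjoint[OF _ Su] active_disjoint[OF _ Sw] by blast
        from cut_weight_merge[OF Su_Sw_disjoint a x z b dual_nonzero_nonempty[OF False] this]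
        have "y S * (cut_weight Su S a x + (if (x \<in> S) \<noteq> (z \<in> S) then 1 else 0) + cut_weight Sw S z b)
            \<le> y S * cut_weight merged S a b"
          using dual_nonneg by (rule mult_left_mono)
        then show ?thesis by (cases "(x \<in> S) \<noteq> (z \<in> S)") (simp_all add: distrib_left)
      qed simp
    qed
  qed (use scale_pos in simp)
  finally show ?thesis .
qed

lemma dist_le_path_bound_merged:
  assumes "u \<in> merged" "w \<in> merged"
  shows "d (pos u) (pos w) \<le> scale * path_bound y merged u w"
proof -
  have inside: "d (pos u) (pos w) \<le> scale * path_bound y merged u w"
    if "T \<in> A" "T \<subseteq> merged" "u \<in> T" "w \<in> T" for T
    using dist_le_path_bound[OF that(1,3,4)] path_bound_mono[OF dual_nonneg order_refl that(2)]
      scale_pos by (meson mult_left_mono less_imp_le order_trans)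
  consider "u \<in> Su" "w \<in> Su" | "u \<in> Sw" "w \<in> Sw" | "u \<in> Su" "w \<in> Sw" | "u \<in> Sw" "w \<in> Su"
    using assms by blast
  then show ?thesis
  proof cases
    case 4
    then show ?thesis
      using dist_le_path_bound_cross[of w u] d_sym path_bound_def cut_weight_sym by simp
  qed (use inside[OF Su] inside[OF Sw] dist_le_path_bound_cross in auto)
qed

lemma waiting_merge:
  "(\<Sum>v\<in>\<Union>A - matched M. t - atime v)
    = (\<Sum>v\<in>\<Union>(active') - matched (M \<union> new_groups). t - atime v)
      + (\<Sum>G\<in>Gs. \<Sum>v\<in>G. t - atime v)"
proof -
  have sub: "\<Union>Gs \<subseteq> \<Union>A - matched M" using Gs_merged Gs_unmatched Su Sw by blast
  have "\<Union>(active') - matched (M \<union> new_groups) = (\<Union>A - matched M) - \<Union>Gs"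
    unfolding matched_merge using Su Sw by blast
  moreover have "(\<Sum>v\<in>\<Union>Gs. t - atime v) = (\<Sum>G\<in>Gs. \<Sum>v\<in>G. t - atime v)"
    using sum.Union_disjoint[of Gs "\<lambda>v. t - atime v"] finite_new_group Gs_disjoint by (simp add: comp_def)
  moreover have "(\<Sum>v\<in>\<Union>A - matched M. t - atime v)
      = (\<Sum>v\<in>(\<Union>A - matched M) - \<Union>Gs. t - atime v) + (\<Sum>v\<in>\<Union>Gs. t - atime v)"
    using finite_active(1) by (intro sum.subset_diff[OF sub]) simp
  ultimately show ?thesis by simp
qed

lemma group_active_merge:
  assumes p: "p \<in> M \<union> new_groups"
  shows "\<exists>T\<in>active'. fst p \<subseteq> T"
proof (cases "p \<in> M")
  case True
  then obtain T where "T \<in> A" "fst p \<subseteq> T" using group_active by blast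
  then show ?thesis by (cases "T \<in> {Su, Sw}") auto
next
  case False
  then obtain G where "G \<in> Gs" "p = (G, t)" using p by blast
  then show ?thesis using Gs_merged by auto
qed

lemma groups_disjoint_merge:
  assumes pq: "p \<in> M \<union> new_groups" "q \<in> M \<union> new_groups" "p \<noteq> q"
  shows "fst p \<inter> fst q = {}"
proof -
  have old: "fst p \<subseteq> matched M" if "p \<in> M" for p using that unfolding matched_def by blast
  have new: "fst p \<in> Gs \<and> fst p \<inter> matched M = {}" if "p \<in> new_groups" for p
    using that Gs_unmatched by force
  consider "p \<in> M" "q \<in> M" | "p \<in> M" "q \<in> new_groups" | "p \<in> new_groups" "q \<in> M"
    | "p \<in> new_groups" "q \<in> new_groups" using pq(1,2) by blast
  then show ?thesis
  proof cases
    case 4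
    then have "fst p \<noteq> fst q" using pq(3) by auto
    then show ?thesis using 4 new Gs_disjoint by blast
  qed (use pq(3) groups_disjoint old new in blast)+
qed

lemma free_card_less_merge:
  assumes T: "T \<in> active'"
  shows "card (free (M \<union> new_groups) T) < k"
proof (cases "T = merged")
  case True
  have "free (M \<union> new_groups) merged = free M merged - \<Union>Gs" unfolding free_def matched_merge by blast
  then show ?thesis using True Gs_rest by simp
next
  case False
  then have "T \<in> A" and "T \<inter> \<Union>Gs = {}"
    using T other_disjoint_merged Gs_merged by blast+
  then have "free (M \<union> new_groups) T = free M T" unfolding free_def matched_merge by blast
  then show ?thesis using free_card_less[OF \<open>T \<in> A\<close>] by simp
qed

lemma delay_le_merge:
  "(\<Sum>p\<in>M \<union> new_groups. \<Sum>v\<in>fst p. snd p - atime v)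
    + (\<Sum>v\<in>\<Union>active' - matched (M \<union> new_groups). t - atime v)
    \<le> real (k - 1) * scale * dual_total y"
proof -
  have "(\<Sum>p\<in>M \<union> new_groups. \<Sum>v\<in>fst p. snd p - atime v)
      = (\<Sum>p\<in>M. \<Sum>v\<in>fst p. snd p - atime v) + (\<Sum>G\<in>Gs. \<Sum>v\<in>G. t - atime v)"
    using sum_merge[of "\<lambda>G s. \<Sum>v\<in>G. s - atime v"] by simp
  then show ?thesis using delay_le waiting_merge by linarith
qed

lemma distance_le_merge:
  "(\<Sum>p\<in>M \<union> new_groups. group_dist dH pos (fst p))
    \<le> 2 * scale * real k * real (card (M \<union> new_groups)) * dual_total y"
proof -
  have "(\<Sum>G\<in>Gs. group_dist dH pos G) \<le> (\<Sum>G\<in>Gs. 2 * scale * real k * dual_total y)"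
  proof (rule sum_mono)
    fix G assume "G \<in> Gs"
    then have "G \<subseteq> merged" "card G = k" using Gs_merged Gs_card by blast+
    then show "group_dist dH pos G \<le> 2 * scale * real k * dual_total y"
      using group_dist_le_dual_total[OF dual_nonneg dist_le_path_bound_merged] by blast
  qed
  moreover have "(\<Sum>p\<in>M \<union> new_groups. group_dist dH pos (fst p))
      = (\<Sum>p\<in>M. group_dist dH pos (fst p)) + (\<Sum>G\<in>Gs. group_dist dH pos G)"
    using sum_merge[of "\<lambda>G s. group_dist dH pos G"] by simp
  ultimately show ?thesis using distance_le unfolding card_merge by (simp add: algebra_simps)
qed

lemma gd_invariant_merge: "gd_invariant k \<gamma> dH m atime pos t active' (M \<union> new_groups) y"
proof unfold_locales
  show "S \<noteq> {} \<and> S \<subseteq> {..<m}" if "S \<in> active'" for S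
    using that active_sets active_sets[OF Su] active_sets[OF Sw] by auto
  show "S \<inter> T = {}" if "S \<in> active'" "T \<in> active'" "S \<noteq> T" for S T
    using that active_disjoint other_disjoint_merged by blast
  show "0 \<le> y S" for S by (rule dual_nonneg)
  show "\<not> k dvd card S" if "y S \<noteq> 0" for S using that by (rule dual_support_not_dvd)
  show "\<exists>T\<in>active'. S \<subseteq> T" if yS: "y S \<noteq> 0" for S
  proof -
    obtain T where "T \<in> A" "S \<subseteq> T" using dual_support[OF yS] by blast
    then show ?thesis by (cases "T \<in> {Su, Sw}") auto
  qed
  have "\<Union>active' = \<Union>A" using Su Sw by blast
  then show "load y u \<le> rate * (t - atime u)" if "u \<in> \<Union>active'" for u
    using that load_le by simp
  show "dual_sum m y u w \<le> thr u w" if "u < m" "w < m" "u \<noteq> w" for u w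
    using that by (rule dual_feasible)
  show "finite (M \<union> new_groups)" using finite_groups finite_Gs by simp
  show "card (fst p) = k" if "p \<in> M \<union> new_groups" for p
    using that by (elim UnE imageE) (simp_all add: group_card Gs_card)
  show "d (pos u) (pos w) \<le> scale * path_bound y T u w" if "T \<in> active'" "u \<in> T" "w \<in> T" for T u w
    using that dist_le_path_bound dist_le_path_bound_merged by blast
qed (use group_active_merge groups_disjoint_merge free_card_less_merge delay_le_merge
    distance_le_merge in auto)

end

locale gd_advance = gd_invariant +
  fixes t' :: real and y' :: "nat set \<Rightarrow> real"
  assumes later: "t < t'"
    and arrived: "v < m \<Longrightarrow> atime v < t' \<Longrightarrow> v \<in> \<Union>A"
    and y'_def: "y' = (\<lambda>S. if S \<in> A \<and> free M S \<noteq> {} then y S + rate * (t' - t) else y S)"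
    and cross_feasible: "cross A u w \<Longrightarrow> dual_sum m y' u w \<le> thr u w"
begin

abbreviation growing :: "nat set set" where "growing \<equiv> {S \<in> A. free M S \<noteq> {}}"

abbreviation increment :: real where "increment \<equiv> rate * (t' - t)"

lemma increment_pos: "0 < increment"
  using rate_pos later by simp

lemma y'_eq: "y' S = y S + (if S \<in> growing then increment else 0)"
  unfolding y'_def by simp

lemma y_le_y': "y S \<le> y' S"
  using y'_eq[of S] increment_pos by simp

lemma y'_support: "y' S \<noteq> 0 \<Longrightarrow> y S \<noteq> 0 \<or> S \<in> growing"
  using y'_eq[of S] by (auto split: if_splits)

lemma growing_subset: "growing \<subseteq> Pow {..<m}"
  using active_sets by blast

lemma sum_indicator_growing:
  "X \<subseteq> growing \<Longrightarrow> (\<Sum>S\<in>Pow {..<m}. if S \<in> X then increment else 0) = increment * real (card X)"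
  using growing_subset by (simp add: sum.If_cases Int_absorb1 Int_def[symmetric])

lemma dual_total_advance: "dual_total y' = dual_total y + increment * real (card growing)"
  unfolding dual_total_def y'_eq sum.distrib using sum_indicator_growing[OF order_refl] by simp

text \<open>A request lies in at most one active set, so its load grows at rate at most \<open>rate\<close>.\<close>
lemma load_advance:
  assumes u: "u \<in> \<Union>A"
  shows "load y' u \<le> rate * (t' - atime u)"
proof -
  have sub: "{S \<in> growing. u \<in> S} \<subseteq> growing" by blast
  obtain T where "T \<in> A" "u \<in> T" using u by blast
  then have "{S \<in> growing. u \<in> S} \<subseteq> {T}" using active_disjoint by blast
  then have card_le: "card {S \<in> growing. u \<in> S} \<le> 1" using card_mono[of "{T}"] by simp
  have "load y' u = load y u + (\<Sum>S\<in>Pow {..<m}. if S \<in> {S \<in> growing. u \<in> S} then increment else 0)"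
    unfolding load_def y'_eq sum.distrib[symmetric] by (rule sum.cong) auto
  also have "\<dots> = load y u + increment * real (card {S \<in> growing. u \<in> S})"
    by (simp only: sum_indicator_growing[OF sub])
  also have "\<dots> \<le> rate * (t - atime u) + increment"
    using load_le[OF u] card_le increment_pos mult_left_le[of "real (card {S \<in> growing. u \<in> S})" increment]
    by simp
  also have "\<dots> = rate * (t' - atime u)" by (simp add: algebra_simps)
  finally show ?thesis .
qed

text \<open>A pair with one endpoint not yet arrived is bounded by the load of the other endpoint,
  since no dual set contains unarrived requests.\<close>
lemma dual_feasible_unarrived:
  assumes a: "a \<in> \<Union>A" and b: "b < m" "b \<notin> \<Union>A"
  shows "dual_sum m y' a b \<le> thr a b"
proof -
  have "dual_sum m y' a b \<le> load y' a"
    unfolding dual_sum_eq load_def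
  proof (rule sum_mono)
    fix S
    have "b \<notin> S" if "y' S \<noteq> 0"
      using y'_support[OF that] dual_support b(2) by blast
    then show "(if (a \<in> S) \<noteq> (b \<in> S) then y' S else 0) \<le> (if a \<in> S then y' S else 0)"
      by (cases "y' S = 0") auto
  qed
  also have "\<dots> \<le> rate * (t' - atime a)" using load_advance[OF a] .
  also have "\<dots> \<le> rate * \<bar>atime a - atime b\<bar>"
  proof (rule mult_left_mono)
    have "t' \<le> atime b" using arrived[OF b(1)] b(2) by force
    then show "t' - atime a \<le> \<bar>atime a - atime b\<bar>" by (simp add: abs_if)
  qed (use rate_pos in simp)
  also have "\<dots> \<le> thr a b"
    using scale_thr[of a b] d_nonneg scale_rate scale_pos
    by (simp add: rate_def field_simps)
  finally show ?thesis .
qed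

lemma dual_feasible_advance:
  assumes u: "u < m" and w: "w < m" and "u \<noteq> w"
  shows "dual_sum m y' u w \<le> thr u w"
proof -
  consider "cross A u w" | "\<exists>T\<in>A. u \<in> T \<and> w \<in> T"
    | "u \<in> \<Union>A" "w \<notin> \<Union>A" | "w \<in> \<Union>A" "u \<notin> \<Union>A" | "u \<notin> \<Union>A" "w \<notin> \<Union>A"
    using \<open>u \<noteq> w\<close> unfolding cross_def by blast
  then show ?thesis
  proof cases
    case 1
    then show ?thesis by (rule cross_feasible)
  next
    case 2
    then obtain T where T: "T \<in> A" "u \<in> T" "w \<in> T" by blast
    have "dual_sum m y' u w = dual_sum m y u w"
      unfolding dual_sum_eq
    proof (rule sum.cong)
      fix S
      have "S \<notin> growing" if "(u \<in> S) \<noteq> (w \<in> S)"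
        using that T active_disjoint by blast
      then show "(if (u \<in> S) \<noteq> (w \<in> S) then y' S else 0) = (if (u \<in> S) \<noteq> (w \<in> S) then y S else 0)"
        using y'_eq[of S] by auto
    qed simp
    then show ?thesis using dual_feasible[OF u w \<open>u \<noteq> w\<close>] by simp
  next
    case 3
    then show ?thesis using dual_feasible_unarrived w by blast
  next
    case 4
    then show ?thesis using dual_feasible_unarrived[of w u] u dual_sum_sym thr_sym by simp
  next
    case 5
    have "dual_sum m y' u w = 0"
      unfolding dual_sum_eq
    proof (rule sum.neutral, rule ballI)
      fix S
      have "u \<notin> S \<and> w \<notin> S" if "y' S \<noteq> 0"
        using y'_support[OF that] dual_support 5 by blast
      then show "(if (u \<in> S) \<noteq> (w \<in> S) then y' S else 0) = 0" by auto
    qed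
    then show ?thesis using thr_nonneg by simp
  qed
qed

lemma card_free_le: "card (\<Union>A - matched M) \<le> (k - 1) * card growing"
proof -
  have "\<Union>A - matched M = (\<Union>S\<in>growing. free M S)" unfolding free_def by blast
  moreover have "finite growing" using growing_subset by (rule finite_subset) simp
  ultimately have "card (\<Union>A - matched M) \<le> (\<Sum>S\<in>growing. card (free M S))"
    using card_UN_le by simp
  also have "\<dots> \<le> (\<Sum>S\<in>growing. k - 1)"
    using free_card_less by (intro sum_mono) fastforce
  finally show ?thesis by (simp add: mult.commute)
qed

text \<open>Each growing set holds fewer than \<open>k\<close> free requests, so the waiting time of free requests
  grows at most \<open>k - 1\<close> times as fast as \<open>scale\<close> times the dual total.\<close>
lemma delay_advance:
  "(\<Sum>p\<in>M. \<Sum>v\<in>fst p. snd p - atime v) + (\<Sum>v\<in>\<Union>A - matched M. t' - atime v)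
    \<le> real (k - 1) * scale * dual_total y'"
proof -
  have "(\<Sum>v\<in>\<Union>A - matched M. t' - atime v) = (\<Sum>v\<in>\<Union>A - matched M. (t - atime v) + (t' - t))"
    by simp
  also have "\<dots> = (\<Sum>v\<in>\<Union>A - matched M. t - atime v) + real (card (\<Union>A - matched M)) * (t' - t)"
    by (simp only: sum.distrib sum_constant)
  finally have "(\<Sum>v\<in>\<Union>A - matched M. t' - atime v)
      = (\<Sum>v\<in>\<Union>A - matched M. t - atime v) + real (card (\<Union>A - matched M)) * (t' - t)" .
  moreover have "real (card (\<Union>A - matched M)) * (t' - t) \<le> real (k - 1) * real (card growing) * (t' - t)"
    using card_free_le later by (intro mult_right_mono) (simp_all flip: of_nat_mult)
  moreover have "real (k - 1) * real (card growing) * (t' - t) = real (k - 1) * scale * (increment * real (card growing))"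
  proof -
    have "real (k - 1) * scale * (increment * real (card growing))
        = (scale * rate) * (real (k - 1) * real (card growing) * (t' - t))"
      by (simp only: mult_ac)
    then show ?thesis using scale_rate by simp
  qed
  ultimately show ?thesis
    using delay_le unfolding dual_total_advance by (simp add: algebra_simps)
qed

lemma gd_invariant_advance: "gd_invariant k \<gamma> dH m atime pos t' A M y'"
proof unfold_locales
  show "0 \<le> y' S" for S using dual_nonneg[of S] y_le_y'[of S] by linarith
  show "\<exists>T\<in>A. S \<subseteq> T" if "y' S \<noteq> 0" for S using y'_support[OF that] dual_support by blast
  show "\<not> k dvd card S" if "y' S \<noteq> 0" for S
    using y'_support[OF that] dual_support_not_dvd active_not_dvd by blast
  show "d (pos u) (pos w) \<le> scale * path_bound y' S u w" if "S \<in> A" "u \<in> S" "w \<in> S" for S u w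
    using dist_le_path_bound[OF that] path_bound_mono[OF dual_nonneg y_le_y' order_refl]
      scale_pos by (meson mult_left_mono less_imp_le order_trans)
  show "(\<Sum>p\<in>M. group_dist dH pos (fst p)) \<le> 2 * scale * real k * real (card M) * dual_total y'"
    using distance_le dual_total_advance increment_pos scale_pos
    by (smt (verit) mult_left_mono mult_nonneg_nonneg of_nat_0_le_iff)
qed (use active_sets active_disjoint load_advance dual_feasible_advance finite_groups group_card
    group_active groups_disjoint free_card_less delay_advance in auto)

end

context gd_instance
begin

lemma gd_step_invariant:
  assumes step: "gd_step k \<gamma> rate dH m atime pos (t, A, M, y) (t', A', M', y')"
    and inv: "gd_invariant k \<gamma> dH m atime pos t A M y"
  shows "gd_invariant k \<gamma> dH m atime pos t' A' M' y'"
proof -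
  interpret gd_invariant k \<gamma> dH m atime pos t A M y by (rule inv)
  from step show ?thesis
  proof cases
    case advance
    interpret gd_advance k \<gamma> dH m atime pos t A M y t' y'
      by unfold_locales (use advance in auto)
    show ?thesis using gd_invariant_advance advance by simp
  next
    case (arrive v)
    then show ?thesis using gd_invariant_arrive by simp
  next
    case (merge Su Sw u w S Gs)
    interpret gd_merge k \<gamma> dH m atime pos t A M y Su Sw u w Gs
      by unfold_locales (use merge in auto)
    show ?thesis using gd_invariant_merge merge by simp
  qed
qed

lemma gd_reachable_invariant:
  "(gd_step k \<gamma> rate dH m atime pos)\<^sup>*\<^sup>* gd_init (t, A, M, y) \<Longrightarrow> gd_invariant k \<gamma> dH m atime pos t A M y"
proof (induction "(t, A, M, y)" arbitrary: t A M y rule: rtranclp_induct)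
  case base
  then show ?case using gd_invariant_init by (simp add: gd_init_def)
next
  case (step c)
  obtain t0 A0 M0 y0 where c: "c = (t0, A0, M0, y0)" by (cases c)
  show ?case
    using gd_step_invariant step.hyps(2)[unfolded c] step.hyps(3)[OF c] .
qed

end

theorem theorem2:
  fixes dH :: "'p list \<Rightarrow> real" and k \<gamma> m :: nat
    and atime :: "nat \<Rightarrow> real" and pos :: "nat \<Rightarrow> 'p"
    and M :: "(nat set \<times> real) set"
  assumes "k \<ge> 2"
    and "H_metric k \<gamma> dH"
    and "k dvd m"
    and "\<forall>v<m. 0 \<le> atime v"
    and "\<forall>i j. i \<le> j \<longrightarrow> j < m \<longrightarrow> atime i \<le> atime j"
    and "gd_run k \<gamma> (1 / (real \<gamma> * real k ^ 2)) dH m atime pos M"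
  shows "alg_cost dH atime pos M \<le> real ((4 * m * k + k ^ 2) * \<gamma>) * OPT k m dH atime pos"
proof -
  interpret gd_instance k \<gamma> dH m atime pos
    using assms(1,2) by unfold_locales
  obtain t A y where reach: "(gd_step k \<gamma> rate dH m atime pos)\<^sup>*\<^sup>* gd_init (t, A, M, y)"
    and matched: "matched M = {..<m}"
    using assms(6) unfolding gd_run_def rate_def scale_def by blast
  interpret gd_invariant k \<gamma> dH m atime pos t A M y
    using reach by (rule gd_reachable_invariant)
  show ?thesis using alg_cost_le_OPT[OF matched assms(3)] .
qed

end
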